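(* Let $q \ge 2$ and $r \ge 3$ be integers. For $n \ge 1$ let $g^{q\text{-}\mathrm{ff}}_r(n)$ be the maximum cardinality of a family $\mathcal{F} \subseteq [q]^n$ containing no $q$-ary focal family of size $r$. Then there is a positive constant $c^{q\text{-}\mathrm{ff}}_r$ (depending only on $q$ and $r$) such that for every $n$, $$c^{q\text{-}\mathrm{ff}}_r \left(\frac{q}{((q-1)(r-1)+1)^{1/(r-1)}}\right)^n \le g^{q\text{-}\mathrm{ff}}_r(n) \le (r-1)\, q^{\lceil \frac{(r-2)n}{r-1} \rceil}.$$
   Context: Here $[q]=\{1,\dots,q\}$. A family $x^{(0)}, x^{(1)}, \dots, x^{(r-1)}$ of $r$ distinct vectors in $[q]^n$ is a ($q$-ary) focal family with focus $x^{(0)}$ if for every coordinate $i \in [n]$, at least $r-2$ of the $r-1$ entries $x^{(1)}_i, \dots, x^{(r-1)}_i$ are equal to $x^{(0)}_i$. A family contains a focal family of size $r$ if some $r$ distinct members, with some choice of focus among them, form a focal family. *)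

theory Defs
  imports Complex_Main
begin

definition cube :: "nat \<Rightarrow> nat \<Rightarrow> nat list set" where
  "cube q n = {x. length x = n \<and> set x \<subseteq> {1..q}}"

definition focal_family :: "nat \<Rightarrow> nat list set \<Rightarrow> nat list \<Rightarrow> bool" where
  "focal_family n S f \<longleftrightarrow> f \<in> S \<and> (\<forall>i<n. card {y \<in> S - {f}. y ! i = f ! i} \<ge> card S - 2)"

definition contains_focal :: "nat \<Rightarrow> nat \<Rightarrow> nat list set \<Rightarrow> bool" where
  "contains_focal n r F \<longleftrightarrow> (\<exists>S f. S \<subseteq> F \<and> card S = r \<and> focal_family n S f)"

definition g_ff :: "nat \<Rightarrow> nat \<Rightarrow> nat \<Rightarrow> nat" where
  "g_ff q r n = Max {card F | F. F \<subseteq> cube q n \<and> \<not> contains_focal n r F}"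

end

theory Submission
  imports Defs
begin

text \<open>
  Upper bound: colour coordinate \<open>i\<close> by \<open>i mod (r - 1)\<close>. If some member \<open>x\<close> of a
  family had, for every colour \<open>j\<close>, another member agreeing with \<open>x\<close> off colour \<open>j\<close>,
  these \<open>r - 1\<close> witnesses together with \<open>x\<close> would form a focal family with focus \<open>x\<close>.
  So a focal-free family is covered by \<open>r - 1\<close> subfamilies, the \<open>j\<close>-th of which injects
  into the coordinates outside colour \<open>j\<close>, giving at most \<open>(r - 1) q^(n - \<lfloor>n/(r-1)\<rfloor>)\<close>.

  Lower bound: the deletion method. Listing a focal family focus first, each of its \<open>n\<close>
  columns lies in a set of \<open>q M\<close> columns, \<open>M = (q - 1)(r - 1) + 1\<close>, so there are at
  most \<open>N M^n\<close> focal families, \<open>N = q^n\<close>. A \<open>k\<close>-subset of the cube contains on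
  average at most \<open>N M^n (k/N)^r\<close> of them, which is at most \<open>k/2\<close> for \<open>k\<close> about half
  of \<open>(q / M^(1/(r-1)))^n\<close>; deleting a point of each leaves a focal-free family of size
  at least \<open>k/2\<close>.
\<close>

lemma finite_cube: "finite (cube q n)"
  and card_cube: "card (cube q n) = q ^ n"
proof -
  have "cube q n = {xs. set xs \<subseteq> {1..q} \<and> length xs = n}"
    unfolding cube_def by auto
  then show "finite (cube q n)" "card (cube q n) = q ^ n"
    by (simp_all add: finite_lists_length_eq card_lists_length_eq)
qed

lemma cube_memD:
  assumes "x \<in> cube q n"
  shows "length x = n" and "i < n \<Longrightarrow> x ! i \<in> {1..q}"
proof -
  show len: "length x = n" using assms unfolding cube_def by simp
  assume "i < n"
  then have "x ! i \<in> set x" using len by simp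
  then show "x ! i \<in> {1..q}" using assms unfolding cube_def by blast
qed

section \<open>Upper bound\<close>

lemma card_le_power_if_determined_by_coords:
  assumes F: "F \<subseteq> cube q n" and I: "I \<subseteq> {..<n}"
    and determined: "\<And>x y. x \<in> F \<Longrightarrow> y \<in> F \<Longrightarrow> \<forall>i\<in>I. x ! i = y ! i \<Longrightarrow> x = y"
  shows "card F \<le> q ^ card I"
proof -
  define restr where "restr x = map ((!) x) (sorted_list_of_set I)" for x :: "nat list"
  have finI: "finite I" using I finite_subset by blast
  have "inj_on restr F"
    by (rule inj_onI) (auto intro: determined simp: restr_def finI)
  moreover have "x ! i \<in> {1..q}" if "x \<in> F" "i \<in> I" for x i
    using F I that cube_memD(2) by blast
  then have "restr ` F \<subseteq> {xs. set xs \<subseteq> {1..q} \<and> length xs = card I}"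
    unfolding restr_def by (auto simp: finI)
  ultimately have "card F \<le> card {xs. set xs \<subseteq> {1..q} \<and> length xs = card I}"
    by (rule card_inj_on_le) (simp add: finite_lists_length_eq)
  then show ?thesis by (simp add: card_lists_length_eq)
qed

lemma focal_family_of_witnesses:
  assumes x: "length x = n"
    and Y: "\<And>j. j < m \<Longrightarrow> length (Y j) = n \<and> Y j \<noteq> x \<and> (\<forall>i<n. cls i \<noteq> j \<longrightarrow> Y j ! i = x ! i)"
  shows "card (insert x (Y ` {..<m})) = Suc m" and "focal_family n (insert x (Y ` {..<m})) x"
proof -
  have inj: "inj_on Y {..<m}"
  proof (rule inj_onI, rule ccontr)
    fix j j' assume j: "j \<in> {..<m}" "j' \<in> {..<m}" "Y j = Y j'" "j \<noteq> j'"
    have "Y j = x"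
    proof (rule nth_equalityI)
      fix i assume "i < length (Y j)"
      then show "Y j ! i = x ! i"
        using Y[of j] Y[of j'] j by (cases "cls i = j") auto
    qed (use Y j x in auto)
    then show False using Y j by auto
  qed
  have x_notin: "x \<notin> Y ` {..<m}" using Y by auto
  then show card: "card (insert x (Y ` {..<m})) = Suc m"
    using inj by (simp add: card_image)
  show "focal_family n (insert x (Y ` {..<m})) x"
    unfolding focal_family_def
  proof (intro conjI allI impI)
    fix i assume "i < n"
    then have "Y ` ({..<m} - {cls i}) \<subseteq> {y \<in> insert x (Y ` {..<m}) - {x}. y ! i = x ! i}"
      using Y x_notin by auto
    then have "card (Y ` ({..<m} - {cls i})) \<le> card {y \<in> insert x (Y ` {..<m}) - {x}. y ! i = x ! i}"
      by (intro card_mono) auto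
    moreover have "m - 1 \<le> card (Y ` ({..<m} - {cls i}))"
      using inj by (subst card_image) (auto intro: inj_on_subset simp: card_Diff_singleton_if)
    ultimately show "card (insert x (Y ` {..<m})) - 2 \<le> card {y \<in> insert x (Y ` {..<m}) - {x}. y ! i = x ! i}"
      using card by simp
  qed simp
qed

lemma focal_free_unique_off_class:
  assumes F: "F \<subseteq> cube q n" and free: "\<not> contains_focal n (Suc m) F" and x: "x \<in> F"
  shows "\<exists>j<m. \<forall>y\<in>F. (\<forall>i<n. cls i \<noteq> j \<longrightarrow> y ! i = x ! i) \<longrightarrow> y = x"
proof (rule ccontr)
  assume "\<not> ?thesis"
  then obtain Y where Y: "\<And>j. j < m \<Longrightarrow> Y j \<in> F \<and> Y j \<noteq> x \<and> (\<forall>i<n. cls i \<noteq> j \<longrightarrow> Y j ! i = x ! i)"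
    by metis
  have len: "length v = n" if "v \<in> F" for v
    using F that cube_memD(1) by blast
  let ?S = "insert x (Y ` {..<m})"
  have "card ?S = Suc m" "focal_family n ?S x"
    using focal_family_of_witnesses[of x n m Y cls] Y x len by auto
  moreover have "?S \<subseteq> F" using Y x by auto
  ultimately show False using free unfolding contains_focal_def by blast
qed

lemma card_focal_free_le_sum:
  assumes F: "F \<subseteq> cube q n" and free: "\<not> contains_focal n (Suc m) F"
  shows "card F \<le> (\<Sum>j<m. q ^ card {i. i < n \<and> cls i \<noteq> j})"
proof -
  define G where "G j = {x \<in> F. \<forall>y\<in>F. (\<forall>i<n. cls i \<noteq> j \<longrightarrow> y ! i = x ! i) \<longrightarrow> y = x}" for j
  have finG: "finite (G j)" for j
    using finite_subset[OF F finite_cube] unfolding G_def by auto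
  have cardG: "card (G j) \<le> q ^ card {i. i < n \<and> cls i \<noteq> j}" for j
  proof (rule card_le_power_if_determined_by_coords)
    show "G j \<subseteq> cube q n" using F unfolding G_def by auto
  next
    fix x y assume "x \<in> G j" "y \<in> G j" "\<forall>i\<in>{i. i < n \<and> cls i \<noteq> j}. x ! i = y ! i"
    then show "x = y" unfolding G_def by auto
  qed auto
  have "F \<subseteq> (\<Union>j<m. G j)"
    using focal_free_unique_off_class[OF F free] unfolding G_def by blast
  then have "card F \<le> card (\<Union>j<m. G j)"
    using finG by (intro card_mono) auto
  also have "\<dots> \<le> (\<Sum>j<m. card (G j))"
    by (rule card_UN_le) simp
  also have "\<dots> \<le> (\<Sum>j<m. q ^ card {i. i < n \<and> cls i \<noteq> j})"
    by (intro sum_mono cardG)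
  finally show ?thesis .
qed

lemma card_residue_class_ge:
  assumes "j < m"
  shows "n div m \<le> card {i. i < n \<and> i mod m = j}"
proof -
  have "(\<lambda>k. k * m + j) ` {..<n div m} \<subseteq> {i. i < n \<and> i mod m = j}"
  proof clarify
    fix k assume "k < n div m"
    then have "Suc k * m \<le> (n div m) * m"
      by (intro mult_right_mono) auto
    then have "k * m + j < (n div m) * m"
      using assms by simp
    also have "\<dots> \<le> n" by simp
    finally show "k * m + j < n \<and> (k * m + j) mod m = j" using assms by simp
  qed
  moreover have "inj_on (\<lambda>k. k * m + j) {..<n div m}"
    using assms by (intro inj_onI) simp
  ultimately show ?thesis
    using card_inj_on_le[of "\<lambda>k. k * m + j" "{..<n div m}" "{i. i < n \<and> i mod m = j}"] by simp
qed

lemma card_focal_free_le: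
  assumes F: "F \<subseteq> cube q n" and free: "\<not> contains_focal n (Suc m) F" and q: "q \<ge> 1"
  shows "card F \<le> m * q ^ (n - n div m)"
proof -
  have "card {i. i < n \<and> i mod m \<noteq> j} \<le> n - n div m" if "j < m" for j
  proof -
    have "{i. i < n \<and> i mod m \<noteq> j} = {..<n} - {i. i < n \<and> i mod m = j}" by auto
    then have "card {i. i < n \<and> i mod m \<noteq> j} = n - card {i. i < n \<and> i mod m = j}"
      by (simp add: card_Diff_subset subset_eq)
    then show ?thesis
      using card_residue_class_ge[OF that, of n] by simp
  qed
  then have "(\<Sum>j<m. q ^ card {i. i < n \<and> i mod m \<noteq> j}) \<le> (\<Sum>j<m. q ^ (n - n div m))"
    using q by (intro sum_mono power_increasing) auto
  then show ?thesis
    using card_focal_free_le_sum[OF F free, of "\<lambda>i. i mod m"] by simp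
qed

lemma nat_ceiling_fraction_eq:
  assumes "m > 0"
  shows "nat \<lceil>real ((m - 1) * n) / real m\<rceil> = n - n div m"
proof -
  have "real ((m - 1) * n) / real m = real n - real n / real m"
    using assms by (simp add: of_nat_diff field_simps)
  then have "\<lceil>real ((m - 1) * n) / real m\<rceil> = int n - \<lfloor>real n / real m\<rfloor>"
    by (metis ceiling_minus floor_diff_of_int minus_diff_eq of_int_of_nat_eq)
  also have "\<lfloor>real n / real m\<rfloor> = int (n div m)"
    by (simp add: floor_divide_of_nat_eq)
  finally show ?thesis by (simp add: div_le_dividend of_nat_diff)
qed

section \<open>Independent sets in uniform hypergraphs by alteration\<close>

text \<open>Equivalently \<open>(N - r choose k - r) / (N choose k) \<le> (k / N)^r\<close>; the left-hand side is the
  probability that a uniformly random \<open>k\<close>-subset of an \<open>N\<close>-set contains a given \<open>r\<close>-set.\<close>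
lemma binomial_ratio_le_power:
  "r \<le> k \<Longrightarrow> k \<le> N \<Longrightarrow> ((N - r) choose (k - r)) * N ^ r \<le> (N choose k) * k ^ r"
proof (induction r arbitrary: N k)
  case 0
  then show ?case by simp
next
  case (Suc r)
  then obtain N' k' where NK: "N = Suc N'" "k = Suc k'" and rk: "r \<le> k'" "k' \<le> N'"
    by (metis Suc_le_D Suc_le_mono le_trans)
  have IH: "((N' - r) choose (k' - r)) * N' ^ r \<le> (N' choose k') * k' ^ r"
    using Suc.IH[OF rk] .
  have "((N' - r) choose (k' - r)) * N ^ r \<le> (N' choose k') * k ^ r"
  proof (cases "N' = 0")
    case True
    then show ?thesis using rk by simp
  next
    case False
    have "((N' - r) choose (k' - r)) * N ^ r * N' ^ r \<le> (N' choose k') * (k' * N) ^ r"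
      using mult_right_mono[OF IH, of "N ^ r"] by (simp add: power_mult_distrib mult_ac)
    also have "\<dots> \<le> (N' choose k') * (k * N') ^ r"
      using rk NK by (intro mult_left_mono power_mono) (auto simp: algebra_simps)
    finally show ?thesis
      using False by (simp add: power_mult_distrib)
  qed
  then have "((N - Suc r) choose (k - Suc r)) * N ^ Suc r \<le> (N' choose k') * k ^ r * N"
    unfolding NK diff_Suc_Suc power_Suc2 mult.assoc[symmetric] by (rule mult_right_mono) simp
  also have "\<dots> = (N * (N' choose k')) * k ^ r"
    by (simp only: mult_ac)
  also have "N * (N' choose k') = (N choose k) * k"
    unfolding NK by (rule Suc_times_binomial_eq)
  also have "(N choose k) * k * k ^ r = (N choose k) * k ^ Suc r"
    by (simp only: power_Suc mult_ac)
  finally show ?case .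
qed

lemma card_supersets_of_card:
  assumes V: "finite V" and S: "S \<subseteq> V" "card S \<le> k"
  shows "card {A. A \<subseteq> V \<and> card A = k \<and> S \<subseteq> A} = (card V - card S) choose (k - card S)"
proof -
  have finS: "finite S" using V S finite_subset by blast
  have "bij_betw (\<lambda>A. A - S) {A. A \<subseteq> V \<and> card A = k \<and> S \<subseteq> A} {B. B \<subseteq> V - S \<and> card B = k - card S}"
  proof (rule bij_betw_byWitness[where f' = "\<lambda>B. B \<union> S"])
    show "(\<lambda>B. B \<union> S) ` {B. B \<subseteq> V - S \<and> card B = k - card S} \<subseteq> {A. A \<subseteq> V \<and> card A = k \<and> S \<subseteq> A}"
    proof clarify
      fix B assume B: "B \<subseteq> V - S" "card B = k - card S"
      then have "finite B" using V finite_subset by blast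
      then have "card (B \<union> S) = card B + card S"
        using B finS by (intro card_Un_disjoint) auto
      then show "B \<union> S \<subseteq> V \<and> card (B \<union> S) = k \<and> S \<subseteq> B \<union> S"
        using B S by auto
    qed
  qed (use V S finS in \<open>auto simp: card_Diff_subset\<close>)
  then have "card {A. A \<subseteq> V \<and> card A = k \<and> S \<subseteq> A} = card {B. B \<subseteq> V - S \<and> card B = k - card S}"
    by (rule bij_betw_same_card)
  also have "\<dots> = (card V - card S) choose (k - card S)"
    using V S finS by (simp add: n_subsets card_Diff_subset)
  finally show ?thesis .
qed

lemma exists_le_average:
  fixes h :: "'a \<Rightarrow> nat"
  assumes "finite X" "X \<noteq> {}"
  shows "\<exists>A\<in>X. card X * h A \<le> (\<Sum>B\<in>X. h B)"
proof -
  have "Min (h ` X) \<in> h ` X"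
    using assms by (intro Min_in) auto
  then obtain A where A: "A \<in> X" "h A = Min (h ` X)"
    by (metis imageE)
  then have "h A \<le> h B" if "B \<in> X" for B
    using assms(1) that by simp
  then show ?thesis
    using A(1) sum_bounded_below[of X "h A" h] by auto
qed

lemma sum_card_edges_in_subsets:
  assumes V: "finite V" and E: "\<And>S. S \<in> E \<Longrightarrow> S \<subseteq> V \<and> card S = r" and "r \<le> k"
  shows "(\<Sum>A\<in>{A. A \<subseteq> V \<and> card A = k}. card {S \<in> E. S \<subseteq> A}) = card E * ((card V - r) choose (k - r))"
proof -
  let ?X = "{A. A \<subseteq> V \<and> card A = k}"
  have finE: "finite E" using E V by (meson PowI finite_Pow_iff finite_subset subsetI)
  have finX: "finite ?X" using V by simp
  have "(\<Sum>A\<in>?X. card {S \<in> E. S \<subseteq> A}) = (\<Sum>A\<in>?X. \<Sum>S\<in>E. if S \<subseteq> A then 1 else 0)"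
    using finE by (simp add: sum.inter_filter[symmetric])
  also have "\<dots> = (\<Sum>S\<in>E. \<Sum>A\<in>?X. if S \<subseteq> A then 1 else 0)"
    by (rule sum.swap)
  also have "\<dots> = (\<Sum>S\<in>E. card {A \<in> ?X. S \<subseteq> A})"
    using finX by (simp add: sum.inter_filter[symmetric])
  also have "\<dots> = (\<Sum>S\<in>E. (card V - r) choose (k - r))"
  proof (rule sum.cong)
    fix S assume "S \<in> E"
    then show "card {A \<in> ?X. S \<subseteq> A} = (card V - r) choose (k - r)"
      using card_supersets_of_card[OF V, of S k] E assms(3) by (simp add: conj_ac)
  qed simp
  finally show ?thesis by simp
qed

lemma exists_subset_with_few_edges:
  assumes V: "finite V" and E: "\<And>S. S \<in> E \<Longrightarrow> S \<subseteq> V \<and> card S = r" and k: "k \<le> card V"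
  shows "\<exists>A\<subseteq>V. card A = k \<and> card {S \<in> E. S \<subseteq> A} * card V ^ r \<le> card E * k ^ r"
proof (cases "r \<le> k")
  case False
  obtain A where A: "A \<subseteq> V" "card A = k"
    using obtain_subset_with_card_n[OF k] by blast
  have "{S \<in> E. S \<subseteq> A} = {}"
    using E A False V by (auto dest: card_mono[OF finite_subset[OF A(1) V]])
  then have "card {S \<in> E. S \<subseteq> A} * card V ^ r \<le> card E * k ^ r"
    by (simp only: card.empty mult_0 zero_le)
  then show ?thesis using A by blast
next
  case True
  let ?X = "{A. A \<subseteq> V \<and> card A = k}"
  have cardX: "card ?X = card V choose k" using V by (rule n_subsets)
  have finX: "finite ?X" using V by simp
  obtain B where "B \<subseteq> V" "card B = k" using obtain_subset_with_card_n[OF k] by blast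
  then have "?X \<noteq> {}" by blast
  then obtain A where A: "A \<in> ?X"
    and avg: "card ?X * card {S \<in> E. S \<subseteq> A} \<le> (\<Sum>B\<in>?X. card {S \<in> E. S \<subseteq> B})"
    using exists_le_average[OF finX, of "\<lambda>B. card {S \<in> E. S \<subseteq> B}"] by blast
  have "card ?X * card {S \<in> E. S \<subseteq> A} \<le> card E * ((card V - r) choose (k - r))"
    using avg sum_card_edges_in_subsets[of V E r k, OF V E True] by simp
  then have "card {S \<in> E. S \<subseteq> A} * (card V choose k) * card V ^ r \<le> card E * (((card V - r) choose (k - r)) * card V ^ r)"
    using cardX by (simp add: mult_ac)
  also have "\<dots> \<le> card E * ((card V choose k) * k ^ r)"
    using binomial_ratio_le_power[OF True k] by (intro mult_left_mono) auto
  finally have "card {S \<in> E. S \<subseteq> A} * card V ^ r \<le> card E * k ^ r"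
    using k by (simp add: mult_ac)
  then show ?thesis using A by blast
qed

lemma exists_independent_subset_deleting_edges:
  assumes A: "finite A" and E: "{} \<notin> E"
  shows "\<exists>A'\<subseteq>A. (\<forall>S\<in>E. \<not> S \<subseteq> A') \<and> card A \<le> card A' + card {S \<in> E. S \<subseteq> A}"
proof -
  define D where "D = (\<lambda>S. SOME x. x \<in> S) ` {S \<in> E. S \<subseteq> A}"
  have finD: "finite {S \<in> E. S \<subseteq> A}"
    using A by (rule finite_subset[rotated, OF finite_Pow_iff[THEN iffD2]]) auto
  have picked: "(SOME x. x \<in> S) \<in> S" if "S \<in> E" for S
    using E that by (metis ex_in_conv someI_ex)
  have "\<not> S \<subseteq> A - D" if "S \<in> E" for S
    using picked[OF that] that unfolding D_def by blast
  moreover have "card A \<le> card (A - D) + card {S \<in> E. S \<subseteq> A}"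
  proof -
    have "card A \<le> card ((A - D) \<union> D)"
      using A finD unfolding D_def by (intro card_mono) auto
    also have "\<dots> \<le> card (A - D) + card D"
      by (rule card_Un_le)
    also have "card D \<le> card {S \<in> E. S \<subseteq> A}"
      unfolding D_def using finD by (rule card_image_le)
    finally show ?thesis by simp
  qed
  ultimately show ?thesis by blast
qed

lemma independent_subset_by_alteration:
  assumes V: "finite V" and E: "\<And>S. S \<in> E \<Longrightarrow> S \<subseteq> V \<and> card S = r"
    and r: "r \<ge> 1" and k: "k \<le> card V"
  shows "\<exists>A\<subseteq>V. (\<forall>S\<in>E. \<not> S \<subseteq> A) \<and> k * card V ^ r \<le> card A * card V ^ r + card E * k ^ r"
proof -
  obtain B where B: "B \<subseteq> V" "card B = k" and few: "card {S \<in> E. S \<subseteq> B} * card V ^ r \<le> card E * k ^ r"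
    using exists_subset_with_few_edges[OF V E k] by blast
  have "finite B" using B(1) V by (rule finite_subset)
  moreover have "{} \<notin> E" using E r by fastforce
  ultimately obtain A where A: "A \<subseteq> B" "\<forall>S\<in>E. \<not> S \<subseteq> A"
    and "k \<le> card A + card {S \<in> E. S \<subseteq> B}"
    using exists_independent_subset_deleting_edges[of B E] B(2) by blast
  then have "k * card V ^ r \<le> card A * card V ^ r + card {S \<in> E. S \<subseteq> B} * card V ^ r"
    using mult_le_mono1 by (metis add_mult_distrib)
  then have "k * card V ^ r \<le> card A * card V ^ r + card E * k ^ r"
    using few by linarith
  then show ?thesis using A B by blast
qed

lemma independent_subset_of_half_size:
  assumes V: "finite V" and E: "\<And>S. S \<in> E \<Longrightarrow> S \<subseteq> V \<and> card S = Suc m" and m: "m \<ge> 1"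
    and k: "k \<le> card V" and sparse: "(2 * k) ^ m * card E \<le> card V ^ Suc m"
  shows "\<exists>A\<subseteq>V. (\<forall>S\<in>E. \<not> S \<subseteq> A) \<and> k \<le> 2 * card A"
proof -
  define N where "N = card V ^ Suc m"
  obtain A where A: "A \<subseteq> V" "\<forall>S\<in>E. \<not> S \<subseteq> A"
    and alter: "k * N \<le> card A * N + card E * k ^ Suc m"
    using independent_subset_by_alteration[of V E "Suc m" k, OF V E _ k] unfolding N_def by auto
  have "2 * (card E * k ^ m) \<le> 2 ^ m * (card E * k ^ m)"
    using power_increasing[of 1 m "2::nat"] m by (intro mult_right_mono) auto
  also have "\<dots> \<le> N"
    using sparse unfolding N_def by (simp add: power_mult_distrib mult_ac)
  finally have "2 * (card E * k ^ Suc m) \<le> k * N"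
    using mult_le_mono2[of _ _ k] by (simp add: mult_ac)
  then have "k * N \<le> (2 * card A) * N"
    using alter by linarith
  moreover have "N > 0" if "k \<noteq> 0"
    using k that unfolding N_def by auto
  ultimately have "k \<le> 2 * card A"
    by (cases "k = 0") auto
  then show ?thesis using A by blast
qed

lemma independent_subset_lower_bound:
  fixes a :: real
  assumes V: "finite V" and E: "\<And>S. S \<in> E \<Longrightarrow> S \<subseteq> V \<and> card S = Suc m" and m: "m \<ge> 1"
    and a: "0 \<le> a" "a \<le> card V" and sparse: "a ^ m * card E \<le> real (card V) ^ Suc m"
  shows "\<exists>A\<subseteq>V. (\<forall>S\<in>E. \<not> S \<subseteq> A) \<and> a / 8 \<le> card A"
proof (cases "a < 4")
  case True
  show ?thesis
  proof (cases "V = {}")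
    case True
    moreover have "{} \<notin> E" using E by fastforce
    ultimately show ?thesis using a by auto
  next
    case False
    then obtain v where "v \<in> V" by blast
    moreover have "\<not> S \<subseteq> {v}" if "S \<in> E" for S
      using E[OF that] m card_mono[of "{v}" S] by auto
    ultimately show ?thesis using \<open>a < 4\<close> by (intro exI[of _ "{v}"]) auto
  qed
next
  case False
  define k where "k = nat \<lfloor>a / 2\<rfloor>"
  have k_le: "2 * real k \<le> a" and k_ge: "a / 4 \<le> real k"
    using False a unfolding k_def by linarith+
  have "real ((2 * k) ^ m * card E) \<le> a ^ m * card E"
    unfolding of_nat_mult of_nat_power using k_le by (intro mult_right_mono power_mono) auto
  also have "\<dots> \<le> real (card V ^ Suc m)"
    using sparse by simp
  finally have "(2 * k) ^ m * card E \<le> card V ^ Suc m"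
    by (rule of_nat_le_iff[THEN iffD1])
  moreover have "k \<le> card V" using k_le a by linarith
  ultimately obtain A where "A \<subseteq> V" "\<forall>S\<in>E. \<not> S \<subseteq> A" "k \<le> 2 * card A"
    using independent_subset_of_half_size[of V E m k, OF V E m] by blast
  then show ?thesis using k_ge by (intro exI[of _ A]) auto
qed

section \<open>Counting focal families\<close>

definition near_constant_lists :: "nat \<Rightarrow> nat \<Rightarrow> nat \<Rightarrow> nat list set" where
  "near_constant_lists q m a =
     {cs. length cs = m \<and> set cs \<subseteq> {1..q} \<and> length (filter (\<lambda>v. v \<noteq> a) cs) \<le> 1}"

lemma finite_near_constant_lists: "finite (near_constant_lists q m a)"
  by (rule finite_subset[of _ "{cs. set cs \<subseteq> {1..q} \<and> length cs = m}"])
    (auto simp: near_constant_lists_def finite_lists_length_eq)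

lemma near_constant_lists_Suc_subset:
  "near_constant_lists q (Suc m) a
     \<subseteq> Cons a ` near_constant_lists q m a \<union> (\<lambda>b. b # replicate m a) ` ({1..q} - {a})"
proof
  fix cs assume "cs \<in> near_constant_lists q (Suc m) a"
  then obtain b cs' where cs: "cs = b # cs'" "b \<in> {1..q}" "length cs' = m" "set cs' \<subseteq> {1..q}"
    and dev: "length (filter (\<lambda>v. v \<noteq> a) (b # cs')) \<le> 1"
    unfolding near_constant_lists_def by (cases cs) auto
  show "cs \<in> Cons a ` near_constant_lists q m a \<union> (\<lambda>b. b # replicate m a) ` ({1..q} - {a})"
  proof (cases "b = a")
    case True
    then have "cs' \<in> near_constant_lists q m a"
      using cs dev unfolding near_constant_lists_def by simp
    then show ?thesis using cs True by auto
  next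
    case False
    then have "\<forall>v\<in>set cs'. v = a" using dev by (simp add: filter_empty_conv)
    then have "cs' = replicate m a" using cs(3) replicate_length_same[of cs' a] by simp
    then show ?thesis using cs False by auto
  qed
qed

lemma card_near_constant_lists:
  assumes a: "a \<in> {1..q}"
  shows "card (near_constant_lists q m a) \<le> 1 + m * (q - 1)"
proof (induction m)
  case 0
  have "near_constant_lists q 0 a = {[]}"
    unfolding near_constant_lists_def by auto
  then show ?case by simp
next
  case (Suc m)
  let ?L = "near_constant_lists q m a"
  have "card (near_constant_lists q (Suc m) a)
      \<le> card (Cons a ` ?L \<union> (\<lambda>b. b # replicate m a) ` ({1..q} - {a}))"
    by (rule card_mono[OF _ near_constant_lists_Suc_subset]) (simp add: finite_near_constant_lists)
  also have "\<dots> \<le> card (Cons a ` ?L) + card ((\<lambda>b. b # replicate m a) ` ({1..q} - {a}))"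
    by (rule card_Un_le)
  also have "\<dots> \<le> card ?L + card ({1..q} - {a})"
    by (intro add_mono card_image_le) (simp_all add: finite_near_constant_lists)
  also have "\<dots> \<le> 1 + Suc m * (q - 1)"
    using Suc.IH a by simp
  finally show ?case .
qed

text \<open>The possible columns of a focal family listed focus first.\<close>
definition focal_columns :: "nat \<Rightarrow> nat \<Rightarrow> nat list set" where
  "focal_columns q r = (\<Union>a\<in>{1..q}. Cons a ` near_constant_lists q (r - 1) a)"

lemma finite_focal_columns: "finite (focal_columns q r)"
  unfolding focal_columns_def by (simp add: finite_near_constant_lists)

lemma card_focal_columns: "card (focal_columns q r) \<le> q * ((q - 1) * (r - 1) + 1)"
proof -
  have "card (focal_columns q r) \<le> (\<Sum>a\<in>{1..q}. card (Cons a ` near_constant_lists q (r - 1) a))"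
    unfolding focal_columns_def by (rule card_UN_le) simp
  also have "\<dots> \<le> (\<Sum>a\<in>{1..q}. 1 + (r - 1) * (q - 1))"
  proof (rule sum_mono)
    fix a assume "a \<in> {1..q}"
    then show "card (Cons a ` near_constant_lists q (r - 1) a) \<le> 1 + (r - 1) * (q - 1)"
      by (rule order_trans[OF card_image_le[OF finite_near_constant_lists] card_near_constant_lists])
  qed
  finally show ?thesis by (simp add: mult_ac)
qed

lemma card_lists_with_columns_le:
  assumes C: "finite C"
  shows "card {zs. length zs = r \<and> set zs \<subseteq> cube q n \<and> (\<forall>i<n. map (\<lambda>v. v ! i) zs \<in> C)} \<le> card C ^ n"
proof -
  let ?Z = "{zs. length zs = r \<and> set zs \<subseteq> cube q n \<and> (\<forall>i<n. map (\<lambda>v. v ! i) zs \<in> C)}"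
  define columns where "columns zs = map (\<lambda>i. map (\<lambda>v. v ! i) zs) [0..<n]" for zs :: "nat list list"
  have "inj_on columns ?Z"
  proof (rule inj_onI)
    fix zs zs' assume zs: "zs \<in> ?Z" and zs': "zs' \<in> ?Z" and eq: "columns zs = columns zs'"
    show "zs = zs'"
    proof (rule nth_equalityI)
      show "length zs = length zs'" using zs zs' by simp
      fix j assume j: "j < length zs"
      then have "zs ! j \<in> set zs" "zs' ! j \<in> set zs'"
        using zs zs' by simp_all
      then have len: "length (zs ! j) = n" "length (zs' ! j) = n"
        using zs zs' cube_memD(1) by blast+
      show "zs ! j = zs' ! j"
      proof (rule nth_equalityI)
        fix i assume "i < length (zs ! j)"
        then have "columns zs ! i = columns zs' ! i" "i < n"
          using eq len by simp_all
        then have "map (\<lambda>v. v ! i) zs = map (\<lambda>v. v ! i) zs'"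
          unfolding columns_def by simp
        then have "map (\<lambda>v. v ! i) zs ! j = map (\<lambda>v. v ! i) zs' ! j"
          by simp
        then show "zs ! j ! i = zs' ! j ! i"
          using j zs zs' by simp
      qed (use len in simp)
    qed
  qed
  moreover have "columns ` ?Z \<subseteq> {cs. set cs \<subseteq> C \<and> length cs = n}"
    unfolding columns_def by auto
  ultimately have "card ?Z \<le> card {cs. set cs \<subseteq> C \<and> length cs = n}"
    by (rule card_inj_on_le) (simp add: finite_lists_length_eq C)
  then show ?thesis by (simp add: card_lists_length_eq C)
qed

definition focal_sets :: "nat \<Rightarrow> nat \<Rightarrow> nat \<Rightarrow> nat list set set" where
  "focal_sets q n r = {S. S \<subseteq> cube q n \<and> card S = r \<and> (\<exists>f. focal_family n S f)}"

lemma contains_focal_iff_focal_subset: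
  "F \<subseteq> cube q n \<Longrightarrow> contains_focal n r F \<longleftrightarrow> (\<exists>S\<in>focal_sets q n r. S \<subseteq> F)"
  unfolding contains_focal_def focal_sets_def by blast

lemma focal_column:
  assumes S: "S \<subseteq> cube q n" "card S = r" "f \<in> S" and ys: "set ys = S - {f}" "distinct ys"
    and i: "i < n" and agree: "card S - 2 \<le> card {y \<in> S - {f}. y ! i = f ! i}"
  shows "map (\<lambda>v. v ! i) (f # ys) \<in> focal_columns q r"
proof -
  have finS: "finite S" by (rule finite_subset[OF S(1) finite_cube])
  have card_rest: "card (S - {f}) = r - 1" using S finS by simp
  have entry: "v ! i \<in> {1..q}" if "v \<in> S" for v
    using S(1) that i cube_memD(2) by blast
  have split: "card (S - {f}) = card {y \<in> S - {f}. y ! i = f ! i} + card {y \<in> S - {f}. y ! i \<noteq> f ! i}"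
    using card_Int_Diff[of "S - {f}" "{y. y ! i = f ! i}"] finS by (simp add: Int_def set_diff_eq)
  have "length (filter (\<lambda>v. v \<noteq> f ! i) (map (\<lambda>y. y ! i) ys)) = length (filter (\<lambda>y. y ! i \<noteq> f ! i) ys)"
    by (simp add: filter_map comp_def)
  also have "\<dots> = card (set (filter (\<lambda>y. y ! i \<noteq> f ! i) ys))"
    by (rule distinct_card[symmetric]) (simp add: ys(2))
  also have "set (filter (\<lambda>y. y ! i \<noteq> f ! i) ys) = {y \<in> S - {f}. y ! i \<noteq> f ! i}"
    using ys(1) by auto
  also have "card \<dots> = (r - 1) - card {y \<in> S - {f}. y ! i = f ! i}"
    using split card_rest by simp
  also have "\<dots> \<le> 1"
    using agree S(2) by simp
  finally have "length (filter (\<lambda>v. v \<noteq> f ! i) (map (\<lambda>y. y ! i) ys)) \<le> 1" .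
  moreover have "length ys = r - 1"
    using distinct_card[OF ys(2)] ys(1) card_rest by simp
  ultimately have "map (\<lambda>y. y ! i) ys \<in> near_constant_lists q (r - 1) (f ! i)"
    unfolding near_constant_lists_def using ys(1) entry by auto
  then show ?thesis
    unfolding focal_columns_def using entry[OF S(3)] by auto
qed

lemma focal_set_as_list:
  assumes "S \<in> focal_sets q n r"
  shows "\<exists>zs. set zs = S \<and> length zs = r \<and> set zs \<subseteq> cube q n \<and> (\<forall>i<n. map (\<lambda>v. v ! i) zs \<in> focal_columns q r)"
proof -
  from assms obtain f where S: "S \<subseteq> cube q n" "card S = r" "f \<in> S"
    and agree: "\<And>i. i < n \<Longrightarrow> card S - 2 \<le> card {y \<in> S - {f}. y ! i = f ! i}"
    unfolding focal_sets_def focal_family_def by blast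
  have finS: "finite S" by (rule finite_subset[OF S(1) finite_cube])
  obtain ys where ys: "set ys = S - {f}" "distinct ys"
    using finite_distinct_list[of "S - {f}"] finS by blast
  have "set (f # ys) = S" using ys(1) S(3) by auto
  moreover have "r \<noteq> 0"
    using S(2,3) finS card_gt_0_iff by force
  then have "length (f # ys) = r"
    using distinct_card[OF ys(2)] ys(1) S(2,3) finS by simp
  moreover have "\<forall>i<n. map (\<lambda>v. v ! i) (f # ys) \<in> focal_columns q r"
    using focal_column[OF S ys] agree by blast
  ultimately show ?thesis using S(1) by blast
qed

lemma card_focal_sets_le: "card (focal_sets q n r) \<le> (q * ((q - 1) * (r - 1) + 1)) ^ n"
proof -
  let ?Z = "{zs. length zs = r \<and> set zs \<subseteq> cube q n \<and> (\<forall>i<n. map (\<lambda>v. v ! i) zs \<in> focal_columns q r)}"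
  have finZ: "finite ?Z"
    by (rule finite_subset[of _ "{zs. set zs \<subseteq> cube q n \<and> length zs = r}"])
      (auto simp: finite_lists_length_eq finite_cube)
  have "focal_sets q n r \<subseteq> set ` ?Z"
  proof
    fix S assume "S \<in> focal_sets q n r"
    then obtain zs where "set zs = S" "zs \<in> ?Z"
      using focal_set_as_list by blast
    then show "S \<in> set ` ?Z" by blast
  qed
  then have "card (focal_sets q n r) \<le> card (set ` ?Z)"
    using finZ by (intro card_mono) auto
  also have "\<dots> \<le> card ?Z"
    using finZ by (rule card_image_le)
  also have "\<dots> \<le> card (focal_columns q r) ^ n"
    using finite_focal_columns by (rule card_lists_with_columns_le)
  also have "\<dots> \<le> (q * ((q - 1) * (r - 1) + 1)) ^ n"
    using card_focal_columns by (rule power_mono) simp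
  finally show ?thesis .
qed

section \<open>Lower bound\<close>

lemma card_le_g_ff: "F \<subseteq> cube q n \<Longrightarrow> \<not> contains_focal n r F \<Longrightarrow> card F \<le> g_ff q r n"
  and g_ff_attained: "r \<ge> 1 \<Longrightarrow> \<exists>F\<subseteq>cube q n. \<not> contains_focal n r F \<and> card F = g_ff q r n"
proof -
  let ?C = "{card F | F. F \<subseteq> cube q n \<and> \<not> contains_focal n r F}"
  have fin: "finite ?C"
    by (rule finite_subset[of _ "card ` Pow (cube q n)"]) (auto simp: finite_cube)
  show "card F \<le> g_ff q r n" if "F \<subseteq> cube q n" "\<not> contains_focal n r F"
    unfolding g_ff_def using fin that by (intro Max_ge) auto
  assume "r \<ge> 1"
  then have "\<not> contains_focal n r {}"
    unfolding contains_focal_def by auto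
  then have "g_ff q r n \<in> ?C"
    unfolding g_ff_def using fin by (intro Max_in) auto
  then show "\<exists>F\<subseteq>cube q n. \<not> contains_focal n r F \<and> card F = g_ff q r n"
    by auto
qed

lemma focal_sets_sparse:
  fixes q r n :: nat
  assumes r: "r \<ge> 2"
  defines "M \<equiv> (q - 1) * (r - 1) + 1"
  defines "a \<equiv> (real q / real M powr (1 / real (r - 1))) ^ n"
  shows "a ^ (r - 1) * card (focal_sets q n r) \<le> real (card (cube q n)) ^ r"
proof -
  define m where "m = r - 1"
  have r_eq: "r = Suc m" and m: "m \<ge> 1" using r unfolding m_def by auto
  have M: "real M \<ge> 1" unfolding M_def by simp
  have root: "(real M powr (1 / real m)) ^ m = real M"
    using M m by (simp add: powr_realpow[symmetric] powr_powr)
  have "a ^ m = ((real q / real M powr (1 / real m)) ^ m) ^ n"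
    unfolding a_def m_def by (metis power_mult mult.commute)
  also have "\<dots> = (real q ^ m) ^ n / real M ^ n"
    by (simp add: power_divide root)
  also have "(real q ^ m) ^ n = (real q ^ n) ^ m"
    by (metis power_mult mult.commute)
  finally have a_pow: "a ^ m = (real q ^ n) ^ m / real M ^ n" .
  have "card (focal_sets q n r) \<le> q ^ n * M ^ n"
    using card_focal_sets_le[of q n r] unfolding M_def power_mult_distrib .
  then have "real (card (focal_sets q n r)) \<le> real q ^ n * real M ^ n"
    using of_nat_mono[where 'a=real] by fastforce
  then have "a ^ m * card (focal_sets q n r) \<le> a ^ m * (real q ^ n * real M ^ n)"
    unfolding a_pow using M by (intro mult_left_mono) auto
  also have "\<dots> = (real q ^ n) ^ m * real q ^ n"
    using M by (simp add: a_pow)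
  also have "\<dots> = real (card (cube q n)) ^ r"
    by (simp add: card_cube r_eq mult.commute)
  finally show ?thesis unfolding m_def .
qed

lemma g_ff_lower_bound:
  assumes q: "q \<ge> 1" and r: "r \<ge> 2"
  shows "1/8 * (real q / real ((q - 1) * (r - 1) + 1) powr (1 / real (r - 1))) ^ n \<le> real (g_ff q r n)"
proof -
  define M where "M = (q - 1) * (r - 1) + 1"
  define a where "a = (real q / real M powr (1 / real (r - 1))) ^ n"
  have "real M powr (1 / real (r - 1)) \<ge> 1"
    unfolding M_def by (intro ge_one_powr_ge_zero) auto
  then have "0 \<le> real q / real M powr (1 / real (r - 1))" "real q / real M powr (1 / real (r - 1)) \<le> real q"
    using q by (auto simp: divide_le_eq)
  then have a: "0 \<le> a" "a \<le> real (card (cube q n))"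
    unfolding a_def card_cube by (auto intro: power_mono)
  have edges: "\<And>S. S \<in> focal_sets q n r \<Longrightarrow> S \<subseteq> cube q n \<and> card S = Suc (r - 1)"
    unfolding focal_sets_def using r by auto
  have sparse: "a ^ (r - 1) * card (focal_sets q n r) \<le> real (card (cube q n)) ^ Suc (r - 1)"
    using focal_sets_sparse[OF r, of q n] r unfolding a_def M_def by (simp add: Suc_diff_1)
  have "r - 1 \<ge> 1" using r by simp
  then obtain A where A: "A \<subseteq> cube q n" "\<forall>S\<in>focal_sets q n r. \<not> S \<subseteq> A" and "a / 8 \<le> card A"
    using independent_subset_lower_bound[of "cube q n" "focal_sets q n r" "r - 1" a,
        OF finite_cube edges _ a sparse] by blast
  moreover have "card A \<le> g_ff q r n"
    using A contains_focal_iff_focal_subset by (intro card_le_g_ff) auto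
  ultimately show ?thesis
    unfolding a_def M_def by simp
qed

theorem theorem3p1:
  fixes q r :: nat
  assumes "q \<ge> 2" and "r \<ge> 3"
  shows "\<exists>c::real. c > 0 \<and> (\<forall>n\<ge>1.
     c * (real q / (real ((q - 1) * (r - 1) + 1)) powr (1 / real (r - 1))) ^ n \<le> real (g_ff q r n)
     \<and> real (g_ff q r n) \<le> real (r - 1) * real q ^ nat \<lceil>real ((r - 2) * n) / real (r - 1)\<rceil>)"
proof (intro exI[of _ "1/8"] conjI allI impI)
  fix n :: nat
  show "1/8 * (real q / (real ((q - 1) * (r - 1) + 1)) powr (1 / real (r - 1))) ^ n \<le> real (g_ff q r n)"
    using g_ff_lower_bound assms by simp
  obtain F where F: "F \<subseteq> cube q n" "\<not> contains_focal n (Suc (r - 1)) F" "card F = g_ff q r n"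
    using g_ff_attained[of r q n] assms by auto
  have "g_ff q r n \<le> (r - 1) * q ^ (n - n div (r - 1))"
    using card_focal_free_le[OF F(1,2)] F(3) assms by simp
  also have "n - n div (r - 1) = nat \<lceil>real ((r - 2) * n) / real (r - 1)\<rceil>"
    using nat_ceiling_fraction_eq[of "r - 1" n] assms by (simp add: numeral_2_eq_2)
  finally show "real (g_ff q r n) \<le> real (r - 1) * real q ^ nat \<lceil>real ((r - 2) * n) / real (r - 1)\<rceil>"
    by (metis of_nat_le_iff of_nat_mult of_nat_power)
qed simp

end
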